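(* There exist $\varepsilon>0$, a constant $\tilde C>0$ and a constant $0<L<1$ such that for all $|u|\le1$, all $|x|\le\rho+\varepsilon$ and all $k\ge0$, $$|\Sigma_k(x,u)|\le\tilde C|u-1|L^k.$$
   Context: Let $y(x)=\sum_{n\ge1}y_nx^n$, $y_n$ the number of unlabelled rooted trees with $n$ vertices; it satisfies $y(x)=x\exp(\sum_{i\ge1}y(x^i)/i)$ and has radius of convergence $\rho\in(0,1)$ with $y(\rho)=1$. Define $y_0(x,u)=uy(x)$, $y_{k+1}(x,u)=x\exp\left(\sum_{i\ge1}y_k(x^i,u^i)/i\right)$, $w_k(x,u)=y_k(x,u)-y(x)$, and $\Sigma_k(x,u)=\sum_{i\ge2}\frac{w_k(x^i,u^i)}{i}$. *)

theory Defs
  imports "HOL-Analysis.Analysis" "HOL-Library.Multiset"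
begin

text \<open>Unlabelled rooted trees: a root together with a multiset of subtrees
  (isomorphism classes of rooted trees).\<close>
datatype rtree = Node "rtree multiset"

primrec nverts :: "rtree \<Rightarrow> nat" where
  "nverts (Node ts) = Suc (sum_mset (image_mset nverts ts))"

definition ycoef :: "nat \<Rightarrow> nat" where
  "ycoef n = card {t. nverts t = n}"

definition ygf :: "complex \<Rightarrow> complex" where
  "ygf x = (\<Sum>n. of_nat (ycoef n) * x ^ n)"

definition rho :: real where
  "rho = real_of_ereal (conv_radius (\<lambda>n. (of_nat (ycoef n) :: complex)))"

primrec yk :: "nat \<Rightarrow> complex \<Rightarrow> complex \<Rightarrow> complex" where
  "yk 0 x u = u * ygf x"
| "yk (Suc k) x u = x * exp (\<Sum>i. yk k (x ^ (i + 1)) (u ^ (i + 1)) / of_nat (i + 1))"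

definition wk :: "nat \<Rightarrow> complex \<Rightarrow> complex \<Rightarrow> complex" where
  "wk k x u = yk k x u - ygf x"

definition Sigmak :: "nat \<Rightarrow> complex \<Rightarrow> complex \<Rightarrow> complex" where
  "Sigmak k x u = (\<Sum>i. wk k (x ^ (i + 2)) (u ^ (i + 2)) / of_nat (i + 2))"

end

theory Submission
  imports Defs
begin

text \<open>
  P\'olya's equation y(x) = x exp (\<Sum>i\<ge>1. y(x^i)/i) is obtained by letting N \<rightarrow> \<infinity> in the
  Euler product for the trees whose branches have at most N vertices. Subtracting it from the
  recursion for y_k gives w_(k+1)(x,u) = x (e^A - e^B) with |A - B| \<le> \<Sum>i\<ge>1. |w_k(x^i,u^i)|/i,
  where both exponents are dominated by the exponent in the real equation for y(|x|). On a disc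
  |z| \<le> R < \<rho> this gives by induction |w_k(z,v)| \<le> K M^k |v - 1| |z|^(k+1) with
  M = y(R)/(R(1 - R)). Since \<Sigma>_k(x,u) only involves the arguments x^i with i \<ge> 2, it carries the
  factor (M |x|^2)^k, and M |x|^2 < 1 for |x| slightly above \<rho> because y(R) < 1 and \<rho> \<le> 2/5;
  both facts follow from the real equation y = x e^y e^\<sigma> with \<sigma> \<ge> 0.
\<close>

section \<open>Geometric series and power estimates\<close>

lemma geometric_has_sum:
  fixes w :: "'a::{real_normed_field, banach}"
  assumes "norm w < 1"
  shows "((\<lambda>k. w ^ k) has_sum (1 / (1 - w))) UNIV"
    and "(\<lambda>k. norm (w ^ k)) summable_on UNIV"
proof -
  have norms: "summable (\<lambda>k. norm (w ^ k))"
    using assms by (simp add: norm_power summable_geometric)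
  show "((\<lambda>k. w ^ k) has_sum (1 / (1 - w))) UNIV"
    using norm_summable_imp_has_sum[OF norms] geometric_sums[OF assms] by (simp add: divide_inverse)
  show "(\<lambda>k. norm (w ^ k)) summable_on UNIV"
    using norms by (rule summable_nonneg_imp_summable_on) simp
qed

lemma has_sum_prod_geometric_PiE:
  fixes w :: "'a \<Rightarrow> 'b::{real_normed_field, banach}"
  assumes A: "finite A" and w: "\<And>s. s \<in> A \<Longrightarrow> norm (w s) < 1"
  shows "((\<lambda>g. \<Prod>s\<in>A. w s ^ g s) has_sum (\<Prod>s\<in>A. 1 / (1 - w s))) (PiE A (\<lambda>_. UNIV))"
proof -
  have nw: "norm (norm (w s)) < 1" if "s \<in> A" for s using w[OF that] by simp
  have "infsum (\<lambda>g. \<Prod>s\<in>A. w s ^ g s) (PiE A (\<lambda>_. UNIV)) = (\<Prod>s\<in>A. 1 / (1 - w s))"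
    using geometric_has_sum[OF w] by (subst infsum_prod_PiE_abs[OF A]) (auto intro!: prod.cong infsumI)
  moreover have "infsum (\<lambda>g. \<Prod>s\<in>A. norm (w s) ^ g s) (PiE A (\<lambda>_. UNIV))
                 = (\<Prod>s\<in>A. 1 / (1 - norm (w s)))"
    using geometric_has_sum[OF nw] by (subst infsum_prod_PiE_abs[OF A]) (auto intro!: prod.cong infsumI)
  moreover have "(\<Prod>s\<in>A. 1 / (1 - norm (w s))) > 0"
    using w by (intro prod_pos) auto
  ultimately have "(\<lambda>g. \<Prod>s\<in>A. norm (w s) ^ g s) summable_on (PiE A (\<lambda>_. UNIV))"
    using infsum_not_exists by fastforce
  moreover have "(\<lambda>g. norm (\<Prod>s\<in>A. w s ^ g s)) = (\<lambda>g. \<Prod>s\<in>A. norm (w s) ^ g s)"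
    by (simp add: prod_norm[symmetric] norm_power)
  ultimately have "(\<lambda>g. norm (\<Prod>s\<in>A. w s ^ g s)) summable_on (PiE A (\<lambda>_. UNIV))"
    by simp
  then have "(\<lambda>g. \<Prod>s\<in>A. w s ^ g s) summable_on (PiE A (\<lambda>_. UNIV))"
    by (rule abs_summable_summable)
  with \<open>infsum _ _ = (\<Prod>s\<in>A. 1 / (1 - w s))\<close> show ?thesis by (simp add: has_sum_iff)
qed

lemma norm_suminf_le_geometric:
  fixes f :: "nat \<Rightarrow> 'a::banach"
  assumes f: "\<And>n. norm (f n) \<le> c * r ^ n" and r: "0 \<le> r" "r < 1"
  shows "summable f" and "norm (suminf f) \<le> c / (1 - r)"
proof -
  have g: "(\<lambda>n. c * r ^ n) sums (c / (1 - r))"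
    using sums_mult[OF geometric_sums, of r c] r by simp
  show "summable f"
    using summable_norm_comparison_test[OF _ sums_summable[OF g]] f by (blast intro: summable_norm_cancel)
  show "norm (suminf f) \<le> c / (1 - r)"
    using norm_suminf_le[OF f sums_summable[OF g]] g by (simp add: sums_iff)
qed

lemma sums_tail:
  fixes f :: "nat \<Rightarrow> 'a::real_normed_vector"
  assumes "summable f"
  shows "(\<lambda>k. if N < k then f k else 0) sums (suminf f - (\<Sum>k\<le>N. f k))"
proof -
  have "(\<lambda>k. f k - (if k \<in> {..N} then f k else 0)) sums (suminf f - (\<Sum>k\<le>N. f k))"
    by (intro sums_diff summable_sums assms sums_If_finite_set) simp
  moreover have "(\<lambda>k. f k - (if k \<in> {..N} then f k else 0)) = (\<lambda>k. if N < k then f k else 0)"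
    by auto
  ultimately show ?thesis by simp
qed

lemma sums_minus_Ln_one_minus:
  fixes w :: complex
  assumes "norm w < 1"
  shows "(\<lambda>n. w ^ (n + 1) / of_nat (n + 1)) sums (- Ln (1 - w))"
proof -
  have "(\<lambda>n. - ((- (- w)) ^ n) / of_nat n) sums Ln (1 + - w)"
    by (rule Ln_series') (use assms in simp)
  then have "(\<lambda>n. w ^ n / of_nat n) sums (- Ln (1 - w))"
    using sums_minus by fastforce
  then show ?thesis
    using sums_Suc_iff[of "\<lambda>n. w ^ n / of_nat n"] by simp
qed

lemma norm_divide_of_nat_Suc_le: "norm (w / of_nat (n + 1) :: 'a::real_normed_field) \<le> norm w"
proof -
  have "norm w * 1 \<le> norm w * (real n + 1)" by (rule mult_left_mono) auto
  then show ?thesis unfolding norm_divide norm_of_nat by (simp add: divide_le_eq add.commute)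
qed

lemma norm_power_Suc_le:
  assumes "norm x \<le> 1"
  shows "norm (x ^ (n + 1) :: 'a::real_normed_div_algebra) \<le> norm x"
proof -
  have "norm x ^ (n + 1) \<le> norm x ^ 1" by (rule power_decreasing) (use assms in auto)
  then show ?thesis by (simp only: norm_power power_one_right)
qed

lemma power_Suc_le_self: "0 \<le> t \<Longrightarrow> t \<le> 1 \<Longrightarrow> t ^ (n + 1) \<le> (t::real)"
  using norm_power_Suc_le[of t n] by simp

lemma power_power_Suc_le:
  fixes r :: real
  assumes "0 \<le> r" "r \<le> 1" "0 < k"
  shows "(r ^ (n + 1)) ^ k \<le> r ^ n * r ^ k"
proof -
  have "n + k \<le> (n + 1) * k" using assms(3) by (cases k) auto
  then have "r ^ ((n + 1) * k) \<le> r ^ (n + k)" by (rule power_decreasing) (use assms in auto)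
  then show ?thesis by (simp only: power_mult power_add)
qed

lemma power_Suc_Suc_le:
  fixes q :: real
  assumes "0 \<le> q" "q \<le> 1" "q ^ 2 \<le> s"
  shows "q ^ (i + 2) \<le> s"
proof -
  have "q ^ (i + 2) = q ^ 2 * q ^ i" by (simp only: power_add mult.commute)
  also have "\<dots> \<le> s * 1"
    using assms order_trans[OF zero_le_power2 assms(3)] by (intro mult_mono power_le_one) auto
  finally show ?thesis by simp
qed

lemma power_Suc_Suc_power_le:
  fixes q :: real
  assumes "0 \<le> q" "q \<le> 1" "q ^ 2 \<le> s"
  shows "(q ^ (i + 2)) ^ (k + 1) \<le> s ^ (k + 1) * q ^ i"
proof -
  have "q ^ (i + 2) = q ^ 2 * q ^ i" by (simp only: power_add mult.commute)
  then have "(q ^ (i + 2)) ^ (k + 1) = (q ^ 2) ^ (k + 1) * (q ^ i) ^ (k + 1)"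
    by (simp only: power_mult_distrib)
  also have "\<dots> \<le> s ^ (k + 1) * q ^ i"
  proof (rule mult_mono)
    show "(q ^ 2) ^ (k + 1) \<le> s ^ (k + 1)" by (rule power_mono) (use assms in auto)
    show "(q ^ i) ^ (k + 1) \<le> q ^ i"
      using power_decreasing[of 1 "k + 1" "q ^ i"] assms by (simp add: power_le_one)
  qed (use assms order_trans[OF zero_le_power2 assms(3)] in auto)
  finally show ?thesis .
qed

lemma coeff_power_power_le:
  fixes r :: real
  assumes "a 0 = 0" "0 \<le> a k" "0 \<le> r" "r \<le> 1"
  shows "a k * (r ^ (n + 1)) ^ k \<le> r ^ n * (a k * r ^ k)"
proof (cases "k = 0")
  case False
  then show ?thesis
    using mult_left_mono[OF power_power_Suc_le[of r k n] assms(2)] assms by (simp add: algebra_simps)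
qed (use assms in simp)

lemma power_series_at_power_le:
  fixes a :: "nat \<Rightarrow> real"
  assumes "a 0 = 0" "\<And>k. 0 \<le> a k" "0 \<le> r" "r \<le> 1" and sm: "summable (\<lambda>k. a k * r ^ k)"
  shows "(\<Sum>k. a k * (r ^ (n + 1)) ^ k) \<le> r ^ n * (\<Sum>k. a k * r ^ k)"
proof -
  have le: "a k * (r ^ (n + 1)) ^ k \<le> r ^ n * (a k * r ^ k)" for k
    by (rule coeff_power_power_le) (use assms in auto)
  have sm': "summable (\<lambda>k. r ^ n * (a k * r ^ k))" using sm by (rule summable_mult)
  have "summable (\<lambda>k. a k * (r ^ (n + 1)) ^ k)"
    by (rule summable_comparison_test[OF _ sm']) (use le assms in auto)
  then show ?thesis
    using suminf_le[OF le _ sm'] suminf_mult[OF sm] by simp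
qed

lemma norm_power_minus_1_le:
  fixes v :: "'a::real_normed_div_algebra"
  assumes "norm v \<le> 1"
  shows "norm (v ^ m - 1) \<le> real m * norm (v - 1)"
proof (induction m)
  case (Suc m)
  have "norm (v ^ Suc m - 1) = norm (v * (v ^ m - 1) + (v - 1))" by (simp add: algebra_simps)
  also have "\<dots> \<le> norm v * norm (v ^ m - 1) + norm (v - 1)"
    using norm_triangle_ineq[of "v * (v ^ m - 1)" "v - 1"] by (simp add: norm_mult)
  also have "norm v * norm (v ^ m - 1) \<le> norm (v ^ m - 1)"
    by (rule mult_left_le_one_le) (use assms in auto)
  finally show ?case using Suc by (simp add: algebra_simps)
qed simp

lemma norm_exp_minus_exp_le:
  fixes a b :: complex
  assumes "norm a \<le> S" "norm b \<le> S"
  shows "norm (exp a - exp b) \<le> exp S * norm (a - b)"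
proof (rule field_differentiable_bound[of "cball 0 S" exp exp "exp S"])
  fix z :: complex assume "z \<in> cball 0 S"
  then show "norm (exp z) \<le> exp S" using norm_exp[of z] by (simp add: order_trans)
qed (use assms in \<open>auto intro: has_field_derivative_at_within DERIV_exp\<close>)

lemma mult_exp_minus_antimono:
  fixes a b :: real
  assumes "1 \<le> a" "a \<le> b"
  shows "b * exp (- b) \<le> a * exp (- a)"
proof -
  have "1 * (b - a) \<le> a * (b - a)" by (rule mult_right_mono) (use assms in auto)
  then have "b \<le> a * (1 + (b - a))" by (simp add: algebra_simps)
  also have "\<dots> \<le> a * exp (b - a)" using exp_ge_add_one_self[of "b - a"] assms by simp
  finally have "b * exp (- b) \<le> a * exp (b - a) * exp (- b)" by simp
  also have "\<dots> = a * exp (- a)" by (simp add: mult.assoc exp_add[symmetric])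
  finally show ?thesis .
qed

lemma count_sum_replicate_mset:
  "finite A \<Longrightarrow> count (\<Sum>s\<in>A. replicate_mset (g s) s) y = (if y \<in> A then g y else 0)"
  by (induction A rule: finite_induct) auto

section \<open>Counting rooted trees\<close>

definition forest_size :: "rtree multiset \<Rightarrow> nat" where
  "forest_size M = sum_mset (image_mset nverts M)"

lemma nverts_Node: "nverts (Node M) = Suc (forest_size M)"
  by (simp add: forest_size_def)

lemma nverts_pos: "0 < nverts t"
  by (cases t) auto

lemma forest_size_sum_replicate:
  "finite A \<Longrightarrow> forest_size (\<Sum>s\<in>A. replicate_mset (g s) s) = (\<Sum>s\<in>A. g s * nverts s)"
  by (induction A rule: finite_induct) (auto simp: forest_size_def)

lemma nverts_le_forest_size: "t \<in># M \<Longrightarrow> nverts t \<le> forest_size M"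
  by (metis mset_add forest_size_def sum_mset.add_mset image_mset_add_mset le_add1)

lemma size_le_forest_size: "size M \<le> forest_size M"
proof (induction M)
  case (add t M)
  then show ?case using nverts_pos[of t] by (simp add: forest_size_def)
qed (simp add: forest_size_def)

definition trees_upto :: "nat \<Rightarrow> rtree set" where
  "trees_upto N = {t. nverts t \<le> N}"

lemma finite_trees_upto: "finite (trees_upto N)"
proof (induction N)
  case 0
  have "trees_upto 0 = {}" using nverts_pos by (auto simp: trees_upto_def)
  then show ?case by simp
next
  case (Suc N)
  define forests where "forests = (\<Union>n\<le>N. multisets_of_size (trees_upto N) n)"
  have "finite forests" unfolding forests_def using Suc by blast
  moreover have "trees_upto (Suc N) \<subseteq> Node ` forests"
  proof
    fix t assume t: "t \<in> trees_upto (Suc N)"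
    obtain M where M: "t = Node M" by (cases t)
    with t have "forest_size M \<le> N" by (simp add: trees_upto_def forest_size_def)
    then have "set_mset M \<subseteq> trees_upto N" "size M \<le> N"
      using nverts_le_forest_size[of _ M] size_le_forest_size[of M]
      by (auto simp: trees_upto_def intro: order_trans)
    then show "t \<in> Node ` forests" by (auto simp: M forests_def multisets_of_size_def)
  qed
  ultimately show ?case by (rule finite_surj)
qed

lemma finite_trees_of_size: "finite {t. nverts t = n}"
  by (rule finite_subset[OF _ finite_trees_upto[of n]]) (auto simp: trees_upto_def)

primrec path_tree :: "nat \<Rightarrow> rtree" where
  "path_tree 0 = Node {#}"
| "path_tree (Suc n) = Node {# path_tree n #}"

lemma nverts_path_tree: "nverts (path_tree n) = Suc n"
  by (induction n) auto

lemma ycoef_0: "ycoef 0 = 0"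
proof -
  have "{t. nverts t = 0} = {}" using nverts_pos by auto
  then show ?thesis by (simp only: ycoef_def card.empty)
qed

lemma ycoef_pos: assumes "0 < n" shows "0 < ycoef n"
proof -
  have "path_tree (n - 1) \<in> {t. nverts t = n}" using assms by (simp add: nverts_path_tree)
  then have "{t. nverts t = n} \<noteq> {}" by blast
  then show ?thesis using finite_trees_of_size[of n] by (simp add: ycoef_def card_gt_0_iff)
qed

definition ypoly :: "nat \<Rightarrow> 'a::comm_semiring_1 \<Rightarrow> 'a" where
  "ypoly N z = (\<Sum>k\<le>N. of_nat (ycoef k) * z ^ k)"

lemma sum_trees_upto_power_nverts: "(\<Sum>s\<in>trees_upto N. z ^ nverts s) = ypoly N z"
  unfolding ypoly_def
proof -
  have "(\<Sum>s\<in>trees_upto N. z ^ nverts s)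
        = (\<Sum>k\<le>N. \<Sum>s\<in>{s\<in>trees_upto N. nverts s = k}. z ^ nverts s)"
    by (rule sum.group[symmetric]) (use finite_trees_upto[of N] in \<open>auto simp: trees_upto_def\<close>)
  also have "\<dots> = (\<Sum>k\<le>N. of_nat (ycoef k) * z ^ k)"
  proof (rule sum.cong)
    fix k assume "k \<in> {..N}"
    then have "{s\<in>trees_upto N. nverts s = k} = {s. nverts s = k}" by (auto simp: trees_upto_def)
    then show "(\<Sum>s\<in>{s\<in>trees_upto N. nverts s = k}. z ^ nverts s) = of_nat (ycoef k) * z ^ k"
      by (simp add: ycoef_def)
  qed (rule refl)
  finally show "(\<Sum>s\<in>trees_upto N. z ^ nverts s) = (\<Sum>k\<le>N. of_nat (ycoef k) * z ^ k)" .
qed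

lemma norm_power_nverts_less_1: "norm (x::'a::real_normed_div_algebra) < 1 \<Longrightarrow> norm (x ^ nverts s) < 1"
  using nverts_pos[of s] by (simp add: norm_power power_less_one_iff)

definition trees_with_branches_upto :: "nat \<Rightarrow> rtree set" where
  "trees_with_branches_upto N = Node ` {M. set_mset M \<subseteq> trees_upto N}"

lemma trees_upto_Suc_subset: "trees_upto (Suc N) \<subseteq> trees_with_branches_upto N"
proof
  fix t assume t: "t \<in> trees_upto (Suc N)"
  obtain M where M: "t = Node M" by (cases t)
  with t have "forest_size M \<le> N" by (simp add: trees_upto_def forest_size_def)
  then have "set_mset M \<subseteq> trees_upto N"
    using nverts_le_forest_size[of _ M] by (auto simp: trees_upto_def intro: order_trans)
  then show "t \<in> trees_with_branches_upto N" by (auto simp: M trees_with_branches_upto_def)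
qed

text \<open>A tree all of whose branches lie in a finite set \<open>A\<close> is determined by the multiplicities
  of its branches, so summing \<open>x ^ nverts t\<close> over such trees gives an Euler product.\<close>

lemma has_sum_trees_with_branches_upto:
  fixes x :: complex
  assumes x: "norm x < 1"
  shows "((\<lambda>t. x ^ nverts t) has_sum (x * (\<Prod>s\<in>trees_upto N. 1 / (1 - x ^ nverts s))))
           (trees_with_branches_upto N)"
proof -
  define A where "A = trees_upto N"
  have A: "finite A" by (simp add: A_def finite_trees_upto)
  define tree where "tree g = Node (\<Sum>s\<in>A. replicate_mset (g s) s)" for g :: "rtree \<Rightarrow> nat"
  define mult where "mult t = restrict (count (case t of Node M \<Rightarrow> M)) A" for t
  have "((\<lambda>g. x * (\<Prod>s\<in>A. (x ^ nverts s) ^ g s)) has_sum (x * (\<Prod>s\<in>A. 1 / (1 - x ^ nverts s))))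
          (PiE A (\<lambda>_. UNIV))"
    by (intro has_sum_cmult_right has_sum_prod_geometric_PiE A norm_power_nverts_less_1 x)
  also have "?this \<longleftrightarrow> ((\<lambda>t. x ^ nverts t) has_sum (x * (\<Prod>s\<in>A. 1 / (1 - x ^ nverts s))))
                         (trees_with_branches_upto N)"
  proof (rule has_sum_reindex_bij_witness[where i=mult and j=tree])
    fix g :: "rtree \<Rightarrow> nat" assume g: "g \<in> PiE A (\<lambda>_. UNIV)"
    show "mult (tree g) = g"
      using g by (auto simp: mult_def tree_def count_sum_replicate_mset A PiE_def extensional_def)
    have "set_mset (\<Sum>s\<in>A. replicate_mset (g s) s) \<subseteq> A"
    proof
      fix y assume "y \<in># (\<Sum>s\<in>A. replicate_mset (g s) s)"
      then have "count (\<Sum>s\<in>A. replicate_mset (g s) s) y \<noteq> 0" by (simp del: count_sum)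
      then show "y \<in> A" using count_sum_replicate_mset[OF A, of g y] by (auto split: if_splits)
    qed
    then show "tree g \<in> trees_with_branches_upto N"
      by (auto simp: tree_def trees_with_branches_upto_def A_def)
    have "nverts (tree g) = Suc (\<Sum>s\<in>A. g s * nverts s)"
      by (simp only: tree_def nverts_Node forest_size_sum_replicate[OF A])
    then show "x ^ nverts (tree g) = x * (\<Prod>s\<in>A. (x ^ nverts s) ^ g s)"
      by (simp add: power_sum power_mult[symmetric] mult.commute)
  next
    fix t assume "t \<in> trees_with_branches_upto N"
    then obtain M where M: "t = Node M" "set_mset M \<subseteq> A"
      by (auto simp: trees_with_branches_upto_def A_def)
    show "tree (mult t) = t"
      using M by (auto simp: tree_def mult_def count_sum_replicate_mset A count_eq_zero_iff
                       intro!: multiset_eqI)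
    show "mult t \<in> PiE A (\<lambda>_. UNIV)" by (simp add: mult_def)
  qed simp
  finally show ?thesis by (simp add: A_def)
qed

definition polya_exponent :: "nat \<Rightarrow> complex \<Rightarrow> complex" where
  "polya_exponent N x = (\<Sum>n. ypoly N (x ^ (n + 1)) / of_nat (n + 1))"

lemma prod_trees_upto_eq_exp:
  fixes x :: complex
  assumes x: "norm x < 1"
  shows "(\<Prod>s\<in>trees_upto N. 1 / (1 - x ^ nverts s)) = exp (polya_exponent N x)"
proof -
  note log_sums = sums_minus_Ln_one_minus[OF norm_power_nverts_less_1[OF x]]
  have "1 - x ^ nverts s \<noteq> 0" for s using norm_power_nverts_less_1[OF x, of s] by auto
  then have "(\<Prod>s\<in>trees_upto N. 1 / (1 - x ^ nverts s))
             = exp (\<Sum>s\<in>trees_upto N. - Ln (1 - x ^ nverts s))"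
    by (simp add: exp_sum finite_trees_upto exp_minus divide_inverse)
  also have "(\<Sum>s\<in>trees_upto N. - Ln (1 - x ^ nverts s))
             = (\<Sum>n. \<Sum>s\<in>trees_upto N. (x ^ nverts s) ^ (n + 1) / of_nat (n + 1))"
    using log_sums by (simp add: sums_iff suminf_sum)
  also have "\<dots> = polya_exponent N x"
    unfolding polya_exponent_def
  proof (rule suminf_cong)
    fix n
    have "(x ^ nverts s) ^ (n + 1) = (x ^ (n + 1)) ^ nverts s" for s
      by (metis power_mult mult.commute)
    then show "(\<Sum>s\<in>trees_upto N. (x ^ nverts s) ^ (n + 1) / of_nat (n + 1))
               = ypoly N (x ^ (n + 1)) / of_nat (n + 1)"
      by (simp add: sum_divide_distrib[symmetric] sum_trees_upto_power_nverts)
  qed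
  finally show ?thesis .
qed

lemma has_sum_trees_with_branches_upto_exp:
  fixes x :: complex
  assumes "norm x < 1"
  shows "((\<lambda>t. x ^ nverts t) has_sum (x * exp (polya_exponent N x))) (trees_with_branches_upto N)"
  using has_sum_trees_with_branches_upto[OF assms] prod_trees_upto_eq_exp[OF assms] by simp

lemma has_sum_trees_by_size:
  fixes h :: "nat \<Rightarrow> 'a::{banach, real_normed_field}"
  assumes "summable (\<lambda>n. real (ycoef n) * norm (h n))"
  shows "((\<lambda>t. h (nverts t)) has_sum (\<Sum>n. of_nat (ycoef n) * h n)) UNIV"
proof -
  define S where "S = Sigma (UNIV::nat set) (\<lambda>n. {t. nverts t = n})"
  have layer: "((\<lambda>t. h (fst (n, t))) has_sum (of_nat (ycoef n) * h n)) {t. nverts t = n}" for n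
    by (rule has_sum_finiteI) (simp_all add: finite_trees_of_size ycoef_def)
  have layer_norm: "((\<lambda>t. norm (h (fst (n, t)))) has_sum (real (ycoef n) * norm (h n))) {t. nverts t = n}" for n
    by (rule has_sum_finiteI) (simp_all add: finite_trees_of_size ycoef_def)
  have norms: "summable (\<lambda>n. norm (of_nat (ycoef n) * h n :: 'a))"
    using assms by (simp add: norm_mult)
  have "((\<lambda>n. of_nat (ycoef n) * h n) has_sum (\<Sum>n. of_nat (ycoef n) * h n)) UNIV"
    using norm_summable_imp_has_sum[OF norms] summable_norm_cancel[OF norms] by (simp add: summable_sums)
  moreover have "(\<lambda>p. norm (h (fst p))) summable_on S"
    unfolding S_def
    by (rule summable_on_SigmaI[where g="\<lambda>n. real (ycoef n) * norm (h n)"])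
       (use layer_norm summable_nonneg_imp_summable_on[OF assms] in auto)
  then have "(\<lambda>p. h (fst p)) summable_on S" by (rule abs_summable_summable)
  ultimately have "((\<lambda>p. h (fst p)) has_sum (\<Sum>n. of_nat (ycoef n) * h n)) S"
    unfolding S_def using layer by (intro has_sum_SigmaI) auto
  also have "?this \<longleftrightarrow> ((\<lambda>t. h (nverts t)) has_sum (\<Sum>n. of_nat (ycoef n) * h n)) UNIV"
    by (rule has_sum_reindex_bij_witness[where i="\<lambda>t. (nverts t, t)" and j=snd]) (auto simp: S_def)
  finally show ?thesis .
qed

section \<open>The radius of convergence\<close>

lemma conv_radius_ycoef_le_1: "conv_radius (\<lambda>n. of_nat (ycoef n) :: complex) \<le> 1"
proof -
  have "\<not> (\<lambda>n. of_nat (ycoef n) :: complex) \<longlonglongrightarrow> 0"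
  proof
    assume "(\<lambda>n. of_nat (ycoef n) :: complex) \<longlonglongrightarrow> 0"
    then have "(\<lambda>n. norm (of_nat (ycoef n) :: complex)) \<longlonglongrightarrow> norm (0::complex)"
      by (rule tendsto_norm)
    then have "(\<lambda>n. real (ycoef n)) \<longlonglongrightarrow> 0" by simp
    then have "eventually (\<lambda>n. real (ycoef n) < 1) sequentially"
      by (rule order_tendstoD) simp
    then obtain n0 where "\<And>n. n \<ge> n0 \<Longrightarrow> real (ycoef n) < 1"
      unfolding eventually_sequentially by blast
    with ycoef_pos[of "Suc n0"] show False by fastforce
  qed
  then have "\<not> summable (\<lambda>n. (of_nat (ycoef n) :: complex) * 1 ^ n)"
    using summable_LIMSEQ_zero by force
  then show ?thesis
    using conv_radius_leI'[of "\<lambda>n. of_nat (ycoef n) :: complex" 1] by (simp add: one_ereal_def)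
qed

lemma conv_radius_ycoef: "conv_radius (\<lambda>n. of_nat (ycoef n) :: complex) = ereal rho"
proof -
  have "0 \<le> conv_radius (\<lambda>n. of_nat (ycoef n) :: complex)" by (rule conv_radius_nonneg)
  then show ?thesis
    using conv_radius_ycoef_le_1 unfolding rho_def by (cases "conv_radius (\<lambda>n. of_nat (ycoef n) :: complex)") auto
qed

lemma rho_nonneg: "0 \<le> rho"
  using conv_radius_nonneg[of "\<lambda>n. of_nat (ycoef n) :: complex"] by (simp add: conv_radius_ycoef)

lemma rho_le_1: "rho \<le> 1"
  using conv_radius_ycoef_le_1 by (simp add: conv_radius_ycoef)

lemma summable_norm_ycoef:
  "norm z < rho \<Longrightarrow> summable (\<lambda>n. norm (of_nat (ycoef n) * z ^ n :: complex))"
  by (rule abs_summable_in_conv_radius) (simp add: conv_radius_ycoef)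

lemma summable_ycoef_real:
  assumes "0 \<le> r" "r < rho"
  shows "summable (\<lambda>n. real (ycoef n) * r ^ n)"
  using summable_norm_ycoef[of "of_real r"] assms by (simp add: norm_mult norm_power)

definition yreal :: "real \<Rightarrow> real" where
  "yreal t = (\<Sum>n. real (ycoef n) * t ^ n)"

lemma norm_ygf_le: "norm z < rho \<Longrightarrow> norm (ygf z) \<le> yreal (norm z)"
  unfolding ygf_def yreal_def
  using summable_norm[OF summable_norm_ycoef] by (simp add: norm_mult norm_power)

lemma ygf_of_real: assumes "0 \<le> t" "t < rho" shows "ygf (of_real t) = of_real (yreal t)"
proof -
  have "(\<lambda>n. complex_of_real (real (ycoef n) * t ^ n)) sums complex_of_real (yreal t)"
    unfolding yreal_def sums_of_real_iff by (rule summable_sums[OF summable_ycoef_real[OF assms]])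
  then show ?thesis unfolding ygf_def by (simp add: of_real_power sums_iff)
qed

lemma yreal_nonneg: "0 \<le> t \<Longrightarrow> t < rho \<Longrightarrow> 0 \<le> yreal t"
  unfolding yreal_def by (intro suminf_nonneg summable_ycoef_real) auto

lemma yreal_mono: "0 \<le> s \<Longrightarrow> s \<le> t \<Longrightarrow> t < rho \<Longrightarrow> yreal s \<le> yreal t"
  unfolding yreal_def
  by (intro suminf_le summable_ycoef_real mult_left_mono power_mono allI) auto

lemma yreal_ge: assumes "0 \<le> t" "t < rho" shows "t \<le> yreal t"
proof -
  have "1 * t \<le> real (ycoef 1) * t"
    using ycoef_pos[of 1] assms(1) by (intro mult_right_mono) auto
  also have "\<dots> = (\<Sum>n\<in>{1}. real (ycoef n) * t ^ n)" by simp
  also have "\<dots> \<le> yreal t"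
    unfolding yreal_def by (rule sum_le_suminf) (use summable_ycoef_real[OF assms] assms in auto)
  finally show ?thesis by simp
qed

lemma yreal_at_power_le:
  assumes "0 \<le> r" "r < rho"
  shows "yreal (r ^ (n + 1)) \<le> r ^ n * yreal r"
  using power_series_at_power_le[OF _ _ _ _ summable_ycoef_real[OF assms]] assms rho_le_1
  unfolding yreal_def by (simp add: ycoef_0)

lemma yreal_le_scaled:
  assumes "0 \<le> s" "s \<le> R" "R < rho"
  shows "R * yreal s \<le> s * yreal R"
proof -
  have "real (ycoef n) * s ^ n * R \<le> s * (real (ycoef n) * R ^ n)" for n
  proof (cases n)
    case (Suc m)
    have "s ^ m \<le> R ^ m" by (rule power_mono) (use assms in auto)
    then have "(s * R * real (ycoef n)) * s ^ m \<le> (s * R * real (ycoef n)) * R ^ m"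
      by (rule mult_left_mono) (use assms in auto)
    then show ?thesis using Suc by (simp add: algebra_simps)
  qed (simp add: ycoef_0)
  then have "(\<Sum>n. real (ycoef n) * s ^ n * R) \<le> (\<Sum>n. s * (real (ycoef n) * R ^ n))"
    using assms by (intro suminf_le summable_mult summable_mult2 summable_ycoef_real) auto
  then show ?thesis
    using assms summable_ycoef_real[of s] summable_ycoef_real[of R]
    by (simp add: yreal_def suminf_mult suminf_mult2 mult.commute)
qed

lemma ypoly_at_power_le:
  fixes r :: real
  assumes "0 \<le> r" "r \<le> 1"
  shows "ypoly N (r ^ (n + 1)) \<le> r ^ n * ypoly N r"
  unfolding ypoly_def sum_distrib_left
  by (intro sum_mono coeff_power_power_le[where a="\<lambda>k. real (ycoef k)"]) (use assms in \<open>auto simp: ycoef_0\<close>)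

lemma norm_ypoly_le:
  fixes z :: complex
  assumes "norm z \<le> r"
  shows "norm (ypoly N z) \<le> ypoly N r"
  unfolding ypoly_def
  by (rule order_trans[OF norm_sum sum_mono])
     (use assms in \<open>auto simp: norm_mult norm_power intro!: mult_left_mono power_mono\<close>)

definition ytail :: "nat \<Rightarrow> real \<Rightarrow> real" where
  "ytail N r = (\<Sum>k. if N < k then real (ycoef k) * r ^ k else 0)"

lemma ytail_sums:
  assumes "0 \<le> r" "r < rho"
  shows "(\<lambda>k. if N < k then real (ycoef k) * r ^ k else 0) sums (yreal r - ypoly N r)"
  using sums_tail[OF summable_ycoef_real[OF assms], of N] by (simp add: yreal_def ypoly_def)

lemma ytail_eq: "0 \<le> r \<Longrightarrow> r < rho \<Longrightarrow> ytail N r = yreal r - ypoly N r"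
  using ytail_sums unfolding ytail_def by (simp add: sums_iff)

lemma ytail_tendsto_0:
  assumes "0 \<le> r" "r < rho"
  shows "(\<lambda>N. ytail N r) \<longlonglongrightarrow> 0"
proof -
  have "(\<lambda>N. ypoly N r) \<longlonglongrightarrow> yreal r"
    unfolding ypoly_def yreal_def by (rule summable_LIMSEQ'[OF summable_ycoef_real[OF assms]])
  then have "(\<lambda>N. yreal r - ypoly N r) \<longlonglongrightarrow> yreal r - yreal r" by (intro tendsto_intros)
  then show ?thesis using ytail_eq[OF assms] by simp
qed

lemma ytail_at_power_le:
  assumes "0 \<le> r" "r < rho"
  shows "ytail N (r ^ (n + 1)) \<le> r ^ n * ytail N r"
proof -
  define a where "a k = (if N < k then real (ycoef k) else 0)" for k
  have a: "(\<lambda>k. if N < k then real (ycoef k) * s ^ k else 0) = (\<lambda>k. a k * s ^ k)" for s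
    by (auto simp: a_def)
  have "summable (\<lambda>k. a k * r ^ k)"
    using sums_summable[OF ytail_sums[OF assms, of N]] unfolding a .
  then show ?thesis
    using power_series_at_power_le[of a r n] assms rho_le_1 unfolding ytail_def a
    by (simp add: a_def)
qed

lemma norm_ygf_minus_ypoly_le:
  assumes "norm z < rho"
  shows "norm (ygf z - ypoly N z) \<le> ytail N (norm z)"
proof -
  define f where "f k = of_nat (ycoef k) * z ^ k" for k
  have "summable f"
    unfolding f_def using summable_norm_ycoef[OF assms] by (rule summable_norm_cancel)
  moreover have "ygf z = suminf f" "ypoly N z = (\<Sum>k\<le>N. f k)"
    by (simp_all add: ygf_def ypoly_def f_def[abs_def])
  ultimately have "ygf z - ypoly N z = (\<Sum>k. if N < k then f k else 0)"
    using sums_tail[of f N] by (simp add: sums_iff)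
  also have "norm \<dots> \<le> ytail N (norm z)"
    unfolding ytail_def
    by (rule norm_suminf_le) (auto simp: f_def norm_mult norm_power
                                intro: sums_summable[OF ytail_sums] assms)
  finally show ?thesis .
qed

section \<open>P\'olya's equation\<close>

lemma ygf_has_sum_trees:
  assumes "norm x < rho"
  shows "((\<lambda>t. x ^ nverts t) has_sum ygf x) UNIV"
  unfolding ygf_def
  by (rule has_sum_trees_by_size) (use summable_norm_ycoef[OF assms] in \<open>simp add: norm_mult\<close>)

lemma norm_polya_term_le:
  assumes "norm x < rho"
  shows "norm (ygf (x ^ (n + 1)) / of_nat (n + 1)) \<le> yreal (norm x) * norm x ^ n"
proof -
  have x1: "norm x \<le> 1" using assms rho_le_1 by simp
  then have "norm (x ^ (n + 1)) < rho" using assms norm_power_Suc_le[of x n] by simp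
  then have "norm (ygf (x ^ (n + 1))) \<le> yreal (norm x ^ (n + 1))"
    unfolding norm_power[symmetric] by (rule norm_ygf_le)
  then have "norm (ygf (x ^ (n + 1)) / of_nat (n + 1)) \<le> yreal (norm x ^ (n + 1))"
    using norm_divide_of_nat_Suc_le by (rule order_trans[rotated])
  also have "\<dots> \<le> norm x ^ n * yreal (norm x)"
    by (rule yreal_at_power_le) (use assms in auto)
  finally show ?thesis by (simp add: mult.commute)
qed

lemma norm_polya_exponent_le:
  fixes x :: complex
  assumes "norm x \<le> r" "r < 1"
  shows "summable (\<lambda>n. ypoly N (x ^ (n + 1)) / of_nat (n + 1))"
    and "norm (polya_exponent N x) \<le> ypoly N r / (1 - r)"
proof -
  have r: "0 \<le> r" using assms(1) norm_ge_zero order_trans by blast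
  have "norm (ypoly N (x ^ (n + 1)) / of_nat (n + 1)) \<le> ypoly N r * r ^ n" for n
  proof -
    have "norm (x ^ (n + 1)) \<le> r ^ (n + 1)"
      unfolding norm_power by (rule power_mono) (use assms in auto)
    then have "norm (ypoly N (x ^ (n + 1))) \<le> ypoly N (r ^ (n + 1))" by (rule norm_ypoly_le)
    also have "\<dots> \<le> r ^ n * ypoly N r" by (rule ypoly_at_power_le) (use r assms in auto)
    finally show ?thesis
      using norm_divide_of_nat_Suc_le[of "ypoly N (x ^ (n + 1))" n] by (simp add: mult.commute)
  qed
  from norm_suminf_le_geometric[OF this r assms(2)]
  show "summable (\<lambda>n. ypoly N (x ^ (n + 1)) / of_nat (n + 1))"
    and "norm (polya_exponent N x) \<le> ypoly N r / (1 - r)"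
    unfolding polya_exponent_def by auto
qed

lemma norm_ygf_minus_truncated_le:
  assumes x: "norm x < rho"
  shows "norm (ygf x - x * exp (polya_exponent N x)) \<le> ytail (Suc N) (norm x)"
proof -
  define r where "r = norm x"
  have r: "0 \<le> r" "r < rho" "r < 1" using x rho_le_1 by (auto simp: r_def)
  have "((\<lambda>t. if t \<in> trees_with_branches_upto N then x ^ nverts t else 0)
           has_sum (x * exp (polya_exponent N x))) UNIV"
    using has_sum_trees_with_branches_upto_exp[of x N] r
    by (subst has_sum_cong_neutral[where T="trees_with_branches_upto N"]) (auto simp: r_def)
  with ygf_has_sum_trees[OF x]
  have diff: "((\<lambda>t. x ^ nverts t - (if t \<in> trees_with_branches_upto N then x ^ nverts t else 0))
                has_sum (ygf x - x * exp (polya_exponent N x))) UNIV"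
    using has_sum_add[OF _ has_sum_uminusI] by (simp only: diff_conv_add_uminus)
  define h where "h n = (if Suc N < n then r ^ n else 0)" for n
  have "summable (\<lambda>n. real (ycoef n) * norm (h n))"
    by (rule summable_comparison_test[OF _ summable_ycoef_real[OF r(1,2)]]) (use r in \<open>auto simp: h_def\<close>)
  moreover have "(\<lambda>n. real (ycoef n) * h n) = (\<lambda>k. if Suc N < k then real (ycoef k) * r ^ k else 0)"
    by (auto simp: h_def)
  ultimately have "((\<lambda>t. h (nverts t)) has_sum ytail (Suc N) r) UNIV"
    using has_sum_trees_by_size[of h] unfolding ytail_def by simp
  moreover have "norm (x ^ nverts t - (if t \<in> trees_with_branches_upto N then x ^ nverts t else 0))
                 \<le> h (nverts t)" for t
    using trees_upto_Suc_subset[of N] r by (force simp: h_def norm_power r_def trees_upto_def)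
  ultimately show ?thesis using norm_infsum_le[OF diff] by (simp add: r_def)
qed

lemma norm_polya_exponent_diff_le:
  assumes x: "norm x < rho"
  shows "norm ((\<Sum>n. ygf (x ^ (n + 1)) / of_nat (n + 1)) - polya_exponent N x)
         \<le> ytail N (norm x) / (1 - norm x)"
proof -
  define r where "r = norm x"
  have r: "0 \<le> r" "r < rho" "r < 1" using x rho_le_1 by (auto simp: r_def)
  define a where "a n = ygf (x ^ (n + 1)) / of_nat (n + 1)" for n
  define b where "b n = ypoly N (x ^ (n + 1)) / of_nat (n + 1)" for n
  have "summable a"
    unfolding a_def by (rule norm_suminf_le_geometric(1)[OF norm_polya_term_le[OF x]]) (use r in \<open>auto simp: r_def\<close>)
  moreover have "summable b"
    unfolding b_def by (rule norm_polya_exponent_le(1)[of x r]) (use r in \<open>auto simp: r_def\<close>)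
  ultimately have diff: "suminf a - polya_exponent N x = (\<Sum>n. a n - b n)"
    unfolding polya_exponent_def b_def[symmetric] by (rule suminf_diff)
  have "norm (a n - b n) \<le> ytail N r * r ^ n" for n
  proof -
    have xn: "norm (x ^ (n + 1)) = r ^ (n + 1)" by (simp only: r_def norm_power)
    then have xn_rho: "norm (x ^ (n + 1)) < rho"
      using norm_power_Suc_le[of x n] r by (simp add: r_def)
    have "norm (a n - b n) \<le> norm (ygf (x ^ (n + 1)) - ypoly N (x ^ (n + 1)))"
      using norm_divide_of_nat_Suc_le by (simp add: a_def b_def diff_divide_distrib[symmetric])
    also have "\<dots> \<le> ytail N (r ^ (n + 1))"
      using norm_ygf_minus_ypoly_le[OF xn_rho] by (simp only: xn)
    also have "\<dots> \<le> r ^ n * ytail N r" by (rule ytail_at_power_le) (use r in auto)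
    finally show ?thesis by (simp add: mult.commute)
  qed
  then show ?thesis
    unfolding a_def[symmetric] diff r_def[symmetric] by (rule norm_suminf_le_geometric(2)) (use r in auto)
qed

theorem ygf_polya_equation:
  assumes x: "norm x < rho"
  shows "ygf x = x * exp (\<Sum>n. ygf (x ^ (n + 1)) / of_nat (n + 1))"
proof -
  define L where "L = (\<Sum>n. ygf (x ^ (n + 1)) / of_nat (n + 1))"
  have r: "0 \<le> norm x" "norm x < 1" using x rho_le_1 by auto
  have tail: "(\<lambda>N. ytail N (norm x)) \<longlonglongrightarrow> 0"
    by (rule ytail_tendsto_0) (use x in auto)
  have "(\<lambda>N. ygf x - x * exp (polya_exponent N x)) \<longlonglongrightarrow> 0"
    by (rule Lim_null_comparison[OF _ LIMSEQ_Suc[OF tail]])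
       (use norm_ygf_minus_truncated_le[OF x] in auto)
  from tendsto_diff[OF tendsto_const[of "ygf x"] this]
  have "(\<lambda>N. x * exp (polya_exponent N x)) \<longlonglongrightarrow> ygf x" by simp
  moreover have "(\<lambda>N. ytail N (norm x) / (1 - norm x)) \<longlonglongrightarrow> 0"
    using tendsto_divide[OF tail tendsto_const, of "1 - norm x"] r by simp
  then have "(\<lambda>N. L - polya_exponent N x) \<longlonglongrightarrow> 0"
    by (rule Lim_null_comparison[rotated]) (use norm_polya_exponent_diff_le[OF x] in \<open>auto simp: L_def\<close>)
  from tendsto_diff[OF tendsto_const[of L] this]
  have "(\<lambda>N. polya_exponent N x) \<longlonglongrightarrow> L" by simp
  then have "(\<lambda>N. x * exp (polya_exponent N x)) \<longlonglongrightarrow> x * exp L"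
    by (intro tendsto_intros)
  ultimately show ?thesis unfolding L_def by (rule LIMSEQ_unique)
qed

lemma yreal_polya_equation:
  assumes t: "0 \<le> t" "t < rho"
  shows "summable (\<lambda>n. yreal (t ^ (n + 1)) / real (n + 1))"
    and "yreal t = t * exp (\<Sum>n. yreal (t ^ (n + 1)) / real (n + 1))"
proof -
  define x where "x = complex_of_real t"
  have x: "norm x < rho" using t by (simp add: x_def)
  have real_term: "ygf (x ^ (n + 1)) / of_nat (n + 1) = of_real (yreal (t ^ (n + 1)) / real (n + 1))" for n
  proof -
    have "t ^ (n + 1) < rho" using norm_power_Suc_le[of t n] t rho_le_1 by simp
    then show ?thesis using ygf_of_real[of "t ^ (n + 1)"] t by (simp add: x_def of_real_power)
  qed
  have "summable (\<lambda>n. ygf (x ^ (n + 1)) / of_nat (n + 1))"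
    by (rule norm_suminf_le_geometric(1)[OF norm_polya_term_le[OF x]]) (use x rho_le_1 in auto)
  then show sm: "summable (\<lambda>n. yreal (t ^ (n + 1)) / real (n + 1))"
    unfolding real_term summable_complex_of_real .
  have "of_real (yreal t) = x * exp (\<Sum>n. ygf (x ^ (n + 1)) / of_nat (n + 1))"
    using ygf_polya_equation[OF x] ygf_of_real[OF t] by (simp add: x_def)
  also have "\<dots> = of_real (t * exp (\<Sum>n. yreal (t ^ (n + 1)) / real (n + 1)))"
    unfolding real_term suminf_of_real[OF sm, symmetric] by (simp only: x_def exp_of_real of_real_mult)
  finally show "yreal t = t * exp (\<Sum>n. yreal (t ^ (n + 1)) / real (n + 1))"
    by (simp only: of_real_eq_iff)
qed

lemma ypoly_Suc_le:
  fixes t :: real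
  assumes "0 \<le> t" "t < 1"
  shows "ypoly (Suc N) t \<le> t * exp (ypoly N t / (1 - t))"
proof -
  define x where "x = complex_of_real t"
  have nx: "norm x = t" using assms by (simp add: x_def)
  have "((\<lambda>s. Re (x ^ nverts s)) has_sum Re (x * exp (polya_exponent N x))) (trees_with_branches_upto N)"
    by (rule has_sum_Re[OF has_sum_trees_with_branches_upto_exp]) (use nx assms in simp)
  then have "((\<lambda>s. t ^ nverts s) has_sum Re (x * exp (polya_exponent N x))) (trees_with_branches_upto N)"
    by (simp add: x_def flip: of_real_power)
  then have "ypoly (Suc N) t \<le> Re (x * exp (polya_exponent N x))"
    unfolding sum_trees_upto_power_nverts[symmetric]
    by (rule finite_sum_le_has_sum) (use trees_upto_Suc_subset finite_trees_upto assms in auto)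
  also have "\<dots> \<le> t * exp (norm (polya_exponent N x))"
    using complex_Re_le_cmod[of "x * exp (polya_exponent N x)"] complex_Re_le_cmod[of "polya_exponent N x"]
      assms(1) by (auto simp: norm_mult nx intro: order_trans mult_left_mono)
  also have "\<dots> \<le> t * exp (ypoly N t / (1 - t))"
    using norm_polya_exponent_le(2)[of x t N] nx assms by (simp add: mult_left_mono)
  finally show ?thesis .
qed

text \<open>The truncations at \<open>1/16\<close> stay below \<open>1\<close> by induction, since \<open>exp 2 / 16 < 1\<close>;
  this is what makes \<open>rho\<close> positive.\<close>

lemma ypoly_one_sixteenth_le_1: "ypoly N (1/16 :: real) \<le> 1"
proof (induction N)
  case 0
  then show ?case by (simp add: ypoly_def ycoef_0)
next
  case (Suc N)
  have "ypoly (Suc N) (1/16 :: real) \<le> 1/16 * exp (ypoly N (1/16) / (1 - 1/16))"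
    by (rule ypoly_Suc_le) auto
  also have "\<dots> \<le> 1/16 * exp 2"
    using Suc by (intro mult_left_mono) (auto simp: divide_le_eq)
  also have "exp (2::real) = exp 1 * exp 1" by (metis exp_add one_add_one)
  also have "exp 1 * exp 1 \<le> (3::real) * 3" using exp_le by (intro mult_mono) auto
  finally show ?case by linarith
qed

lemma rho_ge_one_sixteenth: "1/16 \<le> rho"
proof -
  have "summable (\<lambda>n. real (ycoef n) * (1/16) ^ n)"
  proof (rule summableI_nonneg_bounded)
    show "(\<Sum>i<n. real (ycoef i) * (1/16) ^ i) \<le> 1" for n
      using sum_mono2[of "{..n}" "{..<n}" "\<lambda>i. real (ycoef i) * (1/16) ^ i"] ypoly_one_sixteenth_le_1[of n]
      by (force simp: ypoly_def)
  qed simp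
  then have "summable (\<lambda>n. of_nat (ycoef n) * (complex_of_real (1/16)) ^ n)"
    using summable_complex_of_real[of "\<lambda>n. real (ycoef n) * (1/16) ^ n"] by (simp add: of_real_power)
  then have "ereal (norm (complex_of_real (1/16))) \<le> ereal rho"
    unfolding conv_radius_ycoef[symmetric] by (rule conv_radius_geI)
  then show ?thesis by simp
qed

section \<open>Consequences of the real equation\<close>

definition sigma_real :: "real \<Rightarrow> real" where
  "sigma_real t = (\<Sum>n. yreal (t ^ (n + 2)) / real (n + 2))"

lemma summable_sigma_real:
  assumes "0 \<le> t" "t < rho"
  shows "summable (\<lambda>n. yreal (t ^ (n + 2)) / real (n + 2))"
  using yreal_polya_equation(1)[OF assms] summable_Suc_iff[of "\<lambda>n. yreal (t ^ (n + 1)) / real (n + 1)"]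
  by simp

lemma yreal_eq_exp_sigma_real:
  assumes "0 \<le> t" "t < rho"
  shows "yreal t = t * exp (yreal t) * exp (sigma_real t)"
proof -
  have "(\<Sum>n. yreal (t ^ (n + 1)) / real (n + 1)) = yreal t + sigma_real t"
    using suminf_split_head[OF yreal_polya_equation(1)[OF assms]] by (simp add: sigma_real_def)
  from yreal_polya_equation(2)[OF assms, unfolded this exp_add] show ?thesis
    by (simp only: mult.assoc)
qed

lemma sigma_real_mono:
  assumes "0 \<le> s" "s \<le> t" "t < rho"
  shows "sigma_real s \<le> sigma_real t"
  unfolding sigma_real_def
proof (rule suminf_le[OF _ summable_sigma_real summable_sigma_real])
  fix n
  have "t ^ (n + 2) < rho"
    using power_Suc_le_self[of t "n + 1"] assms rho_le_1 by simp
  then have "yreal (s ^ (n + 2)) \<le> yreal (t ^ (n + 2))"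
    by (intro yreal_mono power_mono) (use assms in auto)
  then show "yreal (s ^ (n + 2)) / real (n + 2) \<le> yreal (t ^ (n + 2)) / real (n + 2)"
    by (simp add: divide_right_mono)
qed (use assms in auto)

lemma sigma_real_nonneg:
  assumes "0 \<le> t" "t < rho"
  shows "0 \<le> sigma_real t"
  unfolding sigma_real_def
proof (intro suminf_nonneg summable_sigma_real divide_nonneg_nonneg yreal_nonneg)
  fix n
  show "t ^ (n + 2) < rho" using power_Suc_le_self[of t "n + 1"] assms rho_le_1 by simp
qed (use assms in auto)

text \<open>Since \<open>y \<le> exp (y - 1)\<close>, the equation \<open>y = t exp y exp (sigma_real t)\<close> with \<open>sigma_real t \<ge> 0\<close>
  forces \<open>t e \<le> 1\<close>.\<close>

lemma mult_exp_1_le_1: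
  assumes "0 < t" "t < rho"
  shows "t * exp 1 \<le> 1"
proof -
  define y where "y = yreal t"
  have "0 < y" using yreal_ge[of t] assms by (simp add: y_def)
  have "t * exp y \<le> t * exp y * exp (sigma_real t)"
    using sigma_real_nonneg[of t] assms by simp
  also have "\<dots> = y" using yreal_eq_exp_sigma_real[of t] assms by (simp add: y_def)
  finally have "t * exp y \<le> y" .
  moreover have "exp 1 * y \<le> exp y"
    using exp_ge_add_one_self[of "y - 1"] by (simp add: exp_diff field_simps)
  then have "t * (exp 1 * y) \<le> t * exp y" by (rule mult_left_mono) (use assms in simp)
  ultimately have "(t * exp 1) * y \<le> 1 * y" by (simp add: mult.assoc)
  then show ?thesis using \<open>0 < y\<close> by (rule mult_right_le_imp_le)
qed

lemma rho_le_two_fifths: "rho \<le> 2/5"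
proof (rule ccontr)
  assume "\<not> rho \<le> 2/5"
  then have "2/5 * exp 1 \<le> (1::real)" by (intro mult_exp_1_le_1) auto
  moreover have "exp 1 > (27/10::real)" using e_approx_32 by (simp add: abs_if split: if_splits)
  ultimately show False by simp
qed

text \<open>\<open>y exp (-y) = t exp (sigma_real t)\<close> is strictly increasing in \<open>t\<close>, while \<open>y exp (-y)\<close> is
  decreasing for \<open>y \<ge> 1\<close>; so \<open>yreal\<close> cannot reach \<open>1\<close> inside the disc of convergence.\<close>

lemma yreal_less_1:
  assumes "0 < R" "R < rho"
  shows "yreal R < 1"
proof (rule ccontr)
  assume "\<not> yreal R < 1"
  define t where "t = (R + rho) / 2"
  have t: "R < t" "t < rho" using assms by (auto simp: t_def)
  have key: "yreal s * exp (- yreal s) = s * exp (sigma_real s)" if "0 \<le> s" "s < rho" for s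
    using yreal_eq_exp_sigma_real[OF that] by (simp add: exp_minus field_simps)
  have "R * exp (sigma_real R) < t * exp (sigma_real t)"
    using sigma_real_mono[of R t] assms t
    by (intro mult_less_le_imp_less) auto
  moreover have "yreal t * exp (- yreal t) \<le> yreal R * exp (- yreal R)"
    using \<open>\<not> yreal R < 1\<close> yreal_mono[of R t] assms t by (intro mult_exp_minus_antimono) auto
  ultimately show False using key[of R] key[of t] assms t by simp
qed

section \<open>Contraction of the iteration\<close>

lemma norm_polya_sum_le:
  fixes f :: "nat \<Rightarrow> complex"
  assumes "0 \<le> r" "r < rho" and f: "\<And>i. norm (f i) \<le> yreal (r ^ (i + 1))"
  shows "summable (\<lambda>i. f i / of_nat (i + 1))"
    and "norm (\<Sum>i. f i / of_nat (i + 1)) \<le> (\<Sum>i. yreal (r ^ (i + 1)) / real (i + 1))"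
proof -
  have le: "norm (f i / of_nat (i + 1)) \<le> yreal (r ^ (i + 1)) / real (i + 1)" for i
    using f[of i] by (simp add: norm_divide divide_right_mono del: of_nat_Suc)
  show "summable (\<lambda>i. f i / of_nat (i + 1))"
    by (rule summable_norm_cancel[OF summable_comparison_test[OF _ yreal_polya_equation(1)]])
       (use le assms in auto)
  show "norm (\<Sum>i. f i / of_nat (i + 1)) \<le> (\<Sum>i. yreal (r ^ (i + 1)) / real (i + 1))"
    by (rule norm_suminf_le[OF le yreal_polya_equation(1)]) (use assms in auto)
qed

lemma norm_yk_le:
  assumes "norm z < rho" "norm v \<le> 1"
  shows "norm (yk k z v) \<le> yreal (norm z)"
  using assms
proof (induction k arbitrary: z v)
  case 0
  have "norm v * norm (ygf z) \<le> norm (ygf z)" by (rule mult_left_le_one_le) (use 0 in auto)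
  then show ?case using norm_ygf_le[OF "0.prems"(1)] by (simp add: norm_mult)
next
  case (Suc k)
  define r where "r = norm z"
  have r: "0 \<le> r" "r < rho" using Suc.prems by (auto simp: r_def)
  have "norm (yk k (z ^ (i + 1)) (v ^ (i + 1))) \<le> yreal (r ^ (i + 1))" for i
  proof -
    have "norm (z ^ (i + 1)) < rho" using norm_power_Suc_le[of z i] Suc.prems rho_le_1 by simp
    moreover have "norm (v ^ (i + 1)) \<le> 1"
      unfolding norm_power by (rule power_le_one) (use Suc.prems in auto)
    ultimately show ?thesis using Suc.IH unfolding r_def norm_power[symmetric] by blast
  qed
  note A = norm_polya_sum_le(2)[OF r this]
  have "norm (yk (Suc k) z v) \<le> r * exp (\<Sum>i. yreal (r ^ (i + 1)) / real (i + 1))"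
    using complex_Re_le_cmod order_trans[OF _ A] r(1) by (auto simp: norm_mult r_def intro!: mult_left_mono)
  also have "\<dots> = yreal (norm z)"
    using yreal_polya_equation(2)[OF r] by (simp add: r_def)
  finally show ?case .
qed

definition wk_coeff :: "real \<Rightarrow> real" where
  "wk_coeff R = yreal R / R"

definition wk_rate :: "real \<Rightarrow> real" where
  "wk_rate R = yreal R / (R * (1 - R))"

lemma wk_coeff_pos: "0 < R \<Longrightarrow> R < rho \<Longrightarrow> 0 < wk_coeff R"
  using yreal_ge[of R] by (simp add: wk_coeff_def)

lemma wk_rate_pos: "0 < R \<Longrightarrow> R < rho \<Longrightarrow> 0 < wk_rate R"
  using yreal_ge[of R] rho_le_1 by (simp add: wk_rate_def)

lemma wk_rate_mult_less_1:
  assumes "0 < R" "R < rho" "0 < s" "s \<le> R * (1 - R)"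
  shows "wk_rate R * s < 1"
proof -
  have "0 < R * (1 - R)" using assms rho_le_1 by simp
  then have "s / (R * (1 - R)) \<le> 1" using assms by simp
  moreover have "wk_rate R * s = yreal R * (s / (R * (1 - R)))" by (simp add: wk_rate_def)
  moreover have "0 \<le> yreal R" using yreal_nonneg[of R] assms by simp
  ultimately have "wk_rate R * s \<le> yreal R * 1" by (metis mult_left_mono)
  then show ?thesis using yreal_less_1[OF assms(1,2)] by simp
qed

lemma norm_wk_power_le:
  assumes "0 < m" "norm v \<le> 1" "0 \<le> C"
    and wk: "norm (wk k (z ^ m) (v ^ m)) \<le> C * norm (v ^ m - 1) * norm (z ^ m) ^ (k + 1)"
  shows "norm (wk k (z ^ m) (v ^ m) / of_nat m) \<le> C * norm (v - 1) * (norm z ^ m) ^ (k + 1)"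
proof -
  have "C * norm (v ^ m - 1) \<le> C * (real m * norm (v - 1))"
    using norm_power_minus_1_le[OF assms(2), of m] assms(3) by (rule mult_left_mono)
  then have "C * norm (v ^ m - 1) * norm (z ^ m) ^ (k + 1)
             \<le> C * (real m * norm (v - 1)) * (norm z ^ m) ^ (k + 1)"
    unfolding norm_power by (rule mult_right_mono) simp
  with wk have "norm (wk k (z ^ m) (v ^ m)) \<le> C * (real m * norm (v - 1)) * (norm z ^ m) ^ (k + 1)"
    by (rule order_trans)
  then show ?thesis using assms(1) by (simp add: norm_divide field_simps)
qed

lemma norm_wk_0_le:
  assumes "0 < R" "R < rho" "norm z \<le> R"
  shows "norm (wk 0 z v) \<le> wk_coeff R * norm (v - 1) * norm z"
proof -
  have "R * norm (ygf z) \<le> R * yreal (norm z)"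
    using norm_ygf_le[of z] assms by (intro mult_left_mono) auto
  also have "\<dots> \<le> norm z * yreal R" by (rule yreal_le_scaled) (use assms in auto)
  finally have "norm (ygf z) \<le> wk_coeff R * norm z"
    using assms(1) by (simp add: wk_coeff_def field_simps)
  then have "norm (v - 1) * norm (ygf z) \<le> norm (v - 1) * (wk_coeff R * norm z)"
    by (rule mult_left_mono) simp
  moreover have "norm (wk 0 z v) = norm (v - 1) * norm (ygf z)"
    by (simp add: wk_def norm_mult[symmetric] algebra_simps)
  ultimately show ?thesis by (simp add: algebra_simps)
qed

lemma norm_suminf_wk_le:
  assumes R: "0 < R" "R < rho" and z: "norm z \<le> R" and v: "norm v \<le> 1"
    and IH: "\<And>w u. norm w \<le> R \<Longrightarrow> norm u \<le> 1 \<Longrightarrow>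
               norm (wk k w u) \<le> wk_coeff R * wk_rate R ^ k * norm (u - 1) * norm w ^ (k + 1)"
  shows "norm (\<Sum>i. wk k (z ^ (i + 1)) (v ^ (i + 1)) / of_nat (i + 1))
         \<le> wk_coeff R * wk_rate R ^ k * norm (v - 1) * norm z ^ (k + 1) / (1 - R)"
proof -
  define r where "r = norm z"
  have r: "0 \<le> r" "r \<le> R" "R < 1" using z R rho_le_1 by (auto simp: r_def)
  define C where "C = wk_coeff R * wk_rate R ^ k"
  have C: "0 \<le> C" using wk_coeff_pos[OF R] wk_rate_pos[OF R] by (simp add: C_def)
  have terms: "norm (wk k (z ^ (i + 1)) (v ^ (i + 1)) / of_nat (i + 1))
               \<le> (C * norm (v - 1) * r ^ (k + 1)) * r ^ i" for i
  proof -
    have "norm (z ^ (i + 1)) \<le> R"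
      using power_Suc_le_self[of r i] r unfolding r_def norm_power by linarith
    moreover have "norm (v ^ (i + 1)) \<le> 1"
      unfolding norm_power by (rule power_le_one) (use v in auto)
    ultimately have "norm (wk k (z ^ (i + 1)) (v ^ (i + 1)) / of_nat (i + 1))
                     \<le> C * norm (v - 1) * (r ^ (i + 1)) ^ (k + 1)"
      unfolding C_def r_def by (intro norm_wk_power_le v IH) (use C in \<open>auto simp: C_def\<close>)
    also have "\<dots> \<le> C * norm (v - 1) * (r ^ i * r ^ (k + 1))"
      using power_power_Suc_le[of r "k + 1" i] r C by (intro mult_left_mono) auto
    finally show ?thesis by (simp add: algebra_simps)
  qed
  have "norm (\<Sum>i. wk k (z ^ (i + 1)) (v ^ (i + 1)) / of_nat (i + 1))
        \<le> C * norm (v - 1) * r ^ (k + 1) / (1 - r)"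
    by (rule norm_suminf_le_geometric(2)[OF terms]) (use r in auto)
  also have "\<dots> \<le> C * norm (v - 1) * r ^ (k + 1) / (1 - R)"
    using C r by (intro divide_left_mono mult_nonneg_nonneg) auto
  finally show ?thesis by (simp add: C_def r_def)
qed

lemma norm_wk_Suc_le:
  assumes R: "0 < R" "R < rho" and z: "norm z \<le> R" and v: "norm v \<le> 1"
    and IH: "\<And>w u. norm w \<le> R \<Longrightarrow> norm u \<le> 1 \<Longrightarrow>
               norm (wk k w u) \<le> wk_coeff R * wk_rate R ^ k * norm (u - 1) * norm w ^ (k + 1)"
  shows "norm (wk (Suc k) z v) \<le> wk_coeff R * wk_rate R ^ Suc k * norm (v - 1) * norm z ^ (Suc k + 1)"
proof -
  define r where "r = norm z"
  have r: "0 \<le> r" "r < rho" using z R by (auto simp: r_def)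
  define d where "d = wk_coeff R * wk_rate R ^ k * norm (v - 1) * r ^ (k + 1) / (1 - R)"
  define S where "S = (\<Sum>i. yreal (r ^ (i + 1)) / real (i + 1))"
  define a where "a i = yk k (z ^ (i + 1)) (v ^ (i + 1))" for i
  define b where "b i = ygf (z ^ (i + 1))" for i
  have "norm (a i) \<le> yreal (r ^ (i + 1)) \<and> norm (b i) \<le> yreal (r ^ (i + 1))" for i
  proof -
    have zr: "norm (z ^ (i + 1)) < rho"
      using norm_power_Suc_le[of z i] r rho_le_1 by (simp add: r_def)
    have vr: "norm (v ^ (i + 1)) \<le> 1"
      unfolding norm_power by (rule power_le_one) (use v in auto)
    show ?thesis
      using norm_yk_le[OF zr vr, of k] norm_ygf_le[OF zr] unfolding a_def b_def r_def norm_power by blast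
  qed
  note A = norm_polya_sum_le[of r a, OF r conjunct1[OF this]]
    and B = norm_polya_sum_le[of r b, OF r conjunct2[OF this]]
  have "(\<Sum>i. a i / of_nat (i + 1)) - (\<Sum>i. b i / of_nat (i + 1))
        = (\<Sum>i. wk k (z ^ (i + 1)) (v ^ (i + 1)) / of_nat (i + 1))"
    by (subst suminf_diff[OF A(1) B(1)]) (simp add: a_def b_def wk_def diff_divide_distrib)
  then have "norm ((\<Sum>i. a i / of_nat (i + 1)) - (\<Sum>i. b i / of_nat (i + 1))) \<le> d"
    using norm_suminf_wk_le[OF R z v IH] by (simp add: d_def r_def)
  then have E: "norm (exp (\<Sum>i. a i / of_nat (i + 1)) - exp (\<Sum>i. b i / of_nat (i + 1))) \<le> exp S * d"
    using norm_exp_minus_exp_le[OF A(2) B(2)] unfolding S_def[symmetric]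
    by (meson exp_ge_zero mult_left_mono order_trans)
  have "wk (Suc k) z v = z * (exp (\<Sum>i. a i / of_nat (i + 1)) - exp (\<Sum>i. b i / of_nat (i + 1)))"
    using ygf_polya_equation[of z] r by (simp add: wk_def a_def b_def r_def algebra_simps)
  then have "norm (wk (Suc k) z v)
             = r * norm (exp (\<Sum>i. a i / of_nat (i + 1)) - exp (\<Sum>i. b i / of_nat (i + 1)))"
    by (simp only: norm_mult r_def)
  also have "\<dots> \<le> r * exp S * d"
    using E r(1) by (simp add: mult_left_mono mult.assoc)
  also have "r * exp S = yreal r"
    using yreal_polya_equation(2)[OF r] by (simp add: S_def)
  also have "yreal r * d \<le> (r * wk_coeff R) * d"
    using yreal_le_scaled[of r R] r z R wk_coeff_pos[OF R] wk_rate_pos[OF R] rho_le_1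
    by (intro mult_right_mono) (auto simp: wk_coeff_def d_def r_def field_simps)
  also have "\<dots> = wk_coeff R * (wk_rate R ^ k * (wk_coeff R / (1 - R))) * norm (v - 1) * r ^ (Suc k + 1)"
    by (simp add: d_def)
  also have "wk_coeff R / (1 - R) = wk_rate R"
    by (simp add: wk_coeff_def wk_rate_def)
  finally show ?thesis by (simp add: r_def mult.commute)
qed

lemma norm_wk_le:
  assumes "0 < R" "R < rho" "norm z \<le> R" "norm v \<le> 1"
  shows "norm (wk k z v) \<le> wk_coeff R * wk_rate R ^ k * norm (v - 1) * norm z ^ (k + 1)"
  using assms(3,4)
proof (induction k arbitrary: z v)
  case 0
  then show ?case using norm_wk_0_le[OF assms(1,2)] by simp
next
  case (Suc k)
  then show ?case using norm_wk_Suc_le[OF assms(1,2)] by blast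
qed

lemma norm_Sigmak_le:
  assumes R: "0 < R" "R < rho" and s: "norm x ^ 2 \<le> s" "s \<le> R"
    and x: "norm x \<le> 1/2" and u: "norm u \<le> 1"
  shows "norm (Sigmak k x u) \<le> 2 * wk_coeff R * s * norm (u - 1) * (wk_rate R * s) ^ k"
proof -
  define q where "q = norm x"
  define C where "C = wk_coeff R * wk_rate R ^ k"
  have C: "0 \<le> C" using wk_coeff_pos[OF R] wk_rate_pos[OF R] by (simp add: C_def)
  have q: "0 \<le> q" "q \<le> 1/2" "q ^ 2 \<le> s" "0 \<le> s"
    using x s order_trans[OF zero_le_power2 s(1)] by (auto simp: q_def)
  have "norm (wk k (x ^ (i + 2)) (u ^ (i + 2)) / of_nat (i + 2))
        \<le> (C * norm (u - 1) * s ^ (k + 1)) * q ^ i" for i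
  proof -
    have "norm (x ^ (i + 2)) \<le> R"
      using power_Suc_Suc_le[of q s i] q s unfolding q_def norm_power by linarith
    moreover have "norm (u ^ (i + 2)) \<le> 1" unfolding norm_power by (rule power_le_one) (use u in auto)
    ultimately have "norm (wk k (x ^ (i + 2)) (u ^ (i + 2)) / of_nat (i + 2))
                     \<le> C * norm (u - 1) * (q ^ (i + 2)) ^ (k + 1)"
      unfolding q_def C_def by (intro norm_wk_power_le u norm_wk_le R) (use C in \<open>auto simp: C_def\<close>)
    also have "\<dots> \<le> C * norm (u - 1) * (s ^ (k + 1) * q ^ i)"
      using power_Suc_Suc_power_le[of q s i k] q C by (intro mult_left_mono) auto
    finally show ?thesis by (simp only: mult.assoc)
  qed
  then have "norm (Sigmak k x u) \<le> C * norm (u - 1) * s ^ (k + 1) / (1 - q)"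
    unfolding Sigmak_def by (rule norm_suminf_le_geometric(2)) (use q in auto)
  also have "\<dots> \<le> C * norm (u - 1) * s ^ (k + 1) / (1/2)"
    using C q s by (intro divide_left_mono mult_nonneg_nonneg) auto
  also have "\<dots> = 2 * wk_coeff R * s * norm (u - 1) * (wk_rate R * s) ^ k"
    by (simp add: C_def power_mult_distrib)
  finally show ?thesis .
qed

lemma exists_inner_radius:
  "\<exists>R \<epsilon>. 0 < \<epsilon> \<and> 0 < R \<and> R < rho \<and> (rho + \<epsilon>)\<^sup>2 \<le> R * (1 - R) \<and> rho + \<epsilon> \<le> 1/2"
proof (intro exI conjI)
  have lo: "1/16 \<le> rho" and hi: "rho \<le> 2/5" by (rule rho_ge_one_sixteenth rho_le_two_fifths)+
  show "0 < rho / 100" "0 < 99/100 * rho" "99/100 * rho < rho" "rho + rho / 100 \<le> 1/2"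
    using lo hi by auto
  have "(rho + rho / 100)\<^sup>2 = (10201/10000 * rho) * rho" by (simp add: power2_eq_square)
  also have "\<dots> \<le> (99/100 * (1 - 99/100 * rho)) * rho" using lo hi by (intro mult_right_mono) auto
  finally show "(rho + rho / 100)\<^sup>2 \<le> 99/100 * rho * (1 - 99/100 * rho)" by (simp add: algebra_simps)
qed

theorem mainTheorem10:
  shows "\<exists>\<epsilon>>0. \<exists>C>0. \<exists>L::real. 0 < L \<and> L < 1 \<and>
    (\<forall>(u::complex) (x::complex) (k::nat). norm u \<le> 1 \<longrightarrow> norm x \<le> rho + \<epsilon> \<longrightarrow>
        norm (Sigmak k x u) \<le> C * norm (u - 1) * L ^ k)"
proof -
  obtain R \<epsilon> where \<epsilon>: "0 < \<epsilon>" and R: "0 < R" "R < rho"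
    and inner: "(rho + \<epsilon>)\<^sup>2 \<le> R * (1 - R)" and half: "rho + \<epsilon> \<le> 1/2"
    using exists_inner_radius by blast
  define s where "s = (rho + \<epsilon>)\<^sup>2"
  have s_pos: "0 < s" using \<epsilon> rho_nonneg by (simp add: s_def)
  have "R * (1 - R) \<le> R * 1" using R by (intro mult_left_mono) auto
  then have sR: "s \<le> R" using inner by (simp add: s_def)
  have "norm (Sigmak k x u) \<le> (2 * wk_coeff R * s) * norm (u - 1) * (wk_rate R * s) ^ k"
    if "norm u \<le> 1" "norm x \<le> rho + \<epsilon>" for u x k
  proof (rule norm_Sigmak_le[OF R _ sR _ that(1)])
    show "norm x ^ 2 \<le> s" unfolding s_def by (rule power_mono[OF that(2)]) simp
    show "norm x \<le> 1/2" using that(2) half by simp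
  qed
  moreover have "0 < 2 * wk_coeff R * s" using wk_coeff_pos[OF R] s_pos by simp
  moreover have "0 < wk_rate R * s" "wk_rate R * s < 1"
    using wk_rate_pos[OF R] s_pos wk_rate_mult_less_1[OF R s_pos] inner by (auto simp: s_def)
  ultimately show ?thesis using \<epsilon> by blast
qed

end
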